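(* Let $0<\alpha<1$ and $\sigma=1-\alpha/2$. Then for every integer $s\ge1$, $$b_s^{(\alpha,\sigma)}:=\frac{1}{2-\alpha}\big[(s+\sigma)^{2-\alpha}-(s-1+\sigma)^{2-\alpha}\big]-\frac12\big[(s+\sigma)^{1-\alpha}+(s-1+\sigma)^{1-\alpha}\big]>0.$$ *)

theory Defs
  imports Complex_Main
begin

end

theory Submission
  imports Defs
begin

text \<open>
  With \<open>p = 1 - \<alpha>\<close> and \<open>a = s - 1 + \<sigma> > 0\<close> the quantity is the integral of
  \<open>t powr p\<close> over \<open>[a, a + 1]\<close> minus its trapezoidal approximation, which is
  positive since \<open>t powr p\<close> is strictly concave. Concretely, the same difference \<open>h x\<close>
  over \<open>[a, a + x]\<close> vanishes at \<open>0\<close>, and its derivative is positive because the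
  secant slope of a strictly concave function exceeds its slope at the right endpoint.
\<close>

lemma powr_diff_gt_right_slope:
  fixes x y p :: real
  assumes "0 < x" "x < y" "0 < p" "p < 1"
  shows "y powr p - x powr p > (y - x) * (p * y powr (p - 1))"
proof -
  have "\<And>t. x \<le> t \<Longrightarrow> t \<le> y \<Longrightarrow> DERIV (\<lambda>t. t powr p) t :> p * t powr (p - 1)"
    using assms by (auto intro!: derivative_eq_intros)
  from MVT2[OF \<open>x < y\<close> this] obtain z where z: "x < z" "z < y"
    "y powr p - x powr p = (y - x) * (p * z powr (p - 1))" by blast
  have "y powr (p - 1) < z powr (p - 1)"
    using z assms by (intro powr_less_mono2_neg) auto
  then show ?thesis using z assms by simp
qed

lemma powr_trapezoid_error_pos:
  fixes a p :: real
  assumes "0 < a" "0 < p" "p < 1"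
  shows "1 / (p + 1) * ((a + 1) powr (p + 1) - a powr (p + 1))
         - 1 / 2 * ((a + 1) powr p + a powr p) > 0"
proof -
  define h where "h x = 1 / (p + 1) * ((a + x) powr (p + 1) - a powr (p + 1))
         - x / 2 * ((a + x) powr p + a powr p)" for x
  define h' where "h' x = 1 / 2 * ((a + x) powr p - a powr p)
         - x / 2 * (p * (a + x) powr (p - 1))" for x
  have "DERIV h x :> h' x" if "0 \<le> x" for x
    unfolding h_def h'_def using assms that
    by (auto intro!: derivative_eq_intros) (simp add: algebra_simps add_divide_distrib)
  then obtain z where z: "0 < z" "z < 1" "h 1 - h 0 = h' z"
    using MVT2[of 0 1 h h'] by force
  have "(a + z) powr p - a powr p > (a + z - a) * (p * (a + z) powr (p - 1))"
    using z assms by (intro powr_diff_gt_right_slope) auto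
  then have "h' z > 0" unfolding h'_def by (simp add: field_simps)
  moreover have "h 0 = 0" unfolding h_def by simp
  ultimately have "h 1 > 0" using z by simp
  then show ?thesis unfolding h_def by simp
qed

theorem corollary2:
  fixes \<alpha> \<sigma> :: real and s :: nat
  assumes "0 < \<alpha>" "\<alpha> < 1" "\<sigma> = 1 - \<alpha> / 2" "1 \<le> s"
  shows "1 / (2 - \<alpha>) * ((real s + \<sigma>) powr (2 - \<alpha>) - (real s - 1 + \<sigma>) powr (2 - \<alpha>))
         - 1 / 2 * ((real s + \<sigma>) powr (1 - \<alpha>) + (real s - 1 + \<sigma>) powr (1 - \<alpha>)) > 0"
proof -
  have "0 < real s - 1 + \<sigma>" using assms by simp
  then have "1 / ((1 - \<alpha>) + 1) * ((real s - 1 + \<sigma> + 1) powr ((1 - \<alpha>) + 1)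
               - (real s - 1 + \<sigma>) powr ((1 - \<alpha>) + 1))
           - 1 / 2 * ((real s - 1 + \<sigma> + 1) powr (1 - \<alpha>) + (real s - 1 + \<sigma>) powr (1 - \<alpha>)) > 0"
    using assms by (intro powr_trapezoid_error_pos) auto
  moreover have "(1 - \<alpha>) + 1 = 2 - \<alpha>" "real s - 1 + \<sigma> + 1 = real s + \<sigma>" by simp_all
  ultimately show ?thesis by simp
qed

end
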